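(* Let $\{a_n\}_{n=1}^\infty\subset(0,1]$ and define $P_n,Q_n:\{-1,1\}^n\to\mathbb{R}$ by $P_0\equiv Q_0\equiv 1$ and \[ P_{n+1}=P_n+\varepsilon_{n+1}a_{n+1}Q_n,\qquad Q_{n+1}=\varepsilon_{n+1}a_{n+1}P_n-Q_n,\qquad n=0,1,\dots \] Then for all $n=1,2,\dots$, the function $|P_n|^2+|Q_n|^2$ is constant, with \[ |P_n|^2+|Q_n|^2\equiv 2\prod_{i=1}^n(1+a_i^2), \] \[ \|P_n\|_2=\|Q_n\|_2=\prod_{i=1}^n(1+a_i^2)^{1/2}, \] \[ \prod_{i=1}^n(1+a_i^2)^{1/2}\le\|P_n\|_\infty,\ \|Q_n\|_\infty\le\sqrt{2}\prod_{i=1}^n(1+a_i^2)^{1/2}, \] and for each $A\subseteq[n]$, \[ \hat P_n(A)^2=\hat Q_n(A)^2=\prod_{i\in A}a_i^2. \]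
   Context: Equip $\{-1,1\}^n$ with the uniform probability measure; $\|g\|_2^2=2^{-n}\sum_{\delta}|g(\delta)|^2$ and $\|g\|_\infty=\max_\delta|g(\delta)|$. Here $\varepsilon_i$ denotes the $i$-th coordinate function $\varepsilon_i(\delta_1,\dots,\delta_m)=\delta_i$ (a function on $\{-1,1\}^m$ for any $m\ge i$; functions on $\{-1,1\}^n$ are regarded as functions on $\{-1,1\}^{n+1}$ not depending on the last coordinate). For $A\subseteq[n]=\{1,\dots,n\}$, $W_A=\prod_{i\in A}\varepsilon_i$ and $\hat g(A)=2^{-n}\sum_{\delta\in\{-1,1\}^n}g(\delta)W_A(\delta)$. *)

theory Defs
  imports "HOL-Library.FuncSet" Complex_Main
begin

definition cube :: "nat \<Rightarrow> (nat \<Rightarrow> real) set" where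
  "cube n = PiE {1..n} (\<lambda>_. {-1, 1})"

fun Pf :: "(nat \<Rightarrow> real) \<Rightarrow> nat \<Rightarrow> (nat \<Rightarrow> real) \<Rightarrow> real"
and Qf :: "(nat \<Rightarrow> real) \<Rightarrow> nat \<Rightarrow> (nat \<Rightarrow> real) \<Rightarrow> real" where
  "Pf a 0 \<delta> = 1"
| "Qf a 0 \<delta> = 1"
| "Pf a (Suc n) \<delta> = Pf a n \<delta> + \<delta> (Suc n) * a (Suc n) * Qf a n \<delta>"
| "Qf a (Suc n) \<delta> = \<delta> (Suc n) * a (Suc n) * Pf a n \<delta> - Qf a n \<delta>"

definition norm2 :: "nat \<Rightarrow> ((nat \<Rightarrow> real) \<Rightarrow> real) \<Rightarrow> real" where
  "norm2 n g = sqrt ((\<Sum>\<delta>\<in>cube n. (g \<delta>)\<^sup>2) / 2 ^ n)"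

definition normInf :: "nat \<Rightarrow> ((nat \<Rightarrow> real) \<Rightarrow> real) \<Rightarrow> real" where
  "normInf n g = Max ((\<lambda>\<delta>. \<bar>g \<delta>\<bar>) ` cube n)"

definition walsh :: "nat set \<Rightarrow> (nat \<Rightarrow> real) \<Rightarrow> real" where
  "walsh A \<delta> = (\<Prod>i\<in>A. \<delta> i)"

definition fourier :: "nat \<Rightarrow> ((nat \<Rightarrow> real) \<Rightarrow> real) \<Rightarrow> nat set \<Rightarrow> real" where
  "fourier n g A = (\<Sum>\<delta>\<in>cube n. g \<delta> * walsh A \<delta>) / 2 ^ n"

end

theory Submission
  imports Defs
begin

text \<open>Everything is proved by induction on n, splitting the cube along the last coordinate
  e = eps(n+1). Because e^2 = 1, the step (P, Q) \<mapsto> (P + e a Q, e a P - Q) multiplies P^2 + Q^2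
  by 1 + a^2 pointwise, which gives the upper sup-norm bounds. Averaging over e cancels the cross
  terms, which gives the L^2 norms and, since ||g||_2 \<le> ||g||_inf, the lower bounds. Averaging
  against W_A shows that passing from n to n + 1 either keeps a Fourier coefficient up to sign
  (if n + 1 \<notin> A) or multiplies the coefficient of the other function at A - {n + 1} by a(n+1)
  (if n + 1 \<in> A).\<close>

lemma real_sqrt_prod: "sqrt (\<Prod>i\<in>S. f i) = (\<Prod>i\<in>S. sqrt (f i))"
  by (induction S rule: infinite_finite_induct) (simp_all add: real_sqrt_mult)

lemma finite_cube: "finite (cube n)"
  unfolding cube_def by (rule finite_PiE) auto

lemma card_cube: "card (cube n) = 2 ^ n"
  unfolding cube_def by (simp add: card_PiE numeral_2_eq_2)

lemma cube_nonempty: "cube n \<noteq> {}"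
  unfolding cube_def by (simp add: PiE_eq_empty_iff)

lemma sum_cube_Suc:
  "(\<Sum>\<delta>\<in>cube (Suc n). g \<delta>) = (\<Sum>\<delta>\<in>cube n. g (\<delta>(Suc n := 1)) + g (\<delta>(Suc n := -1)))"
proof -
  let ?ext = "\<lambda>(y, \<delta>). \<delta>(Suc n := y)"
  have cube_eq: "cube (Suc n) = ?ext ` ({-1, 1} \<times> cube n)"
    unfolding cube_def by (simp add: atLeastAtMostSuc_conv PiE_insert_eq)
  have "inj_on ?ext ({-1, 1} \<times> cube n)"
    unfolding cube_def by (rule inj_combinator) simp
  then have "(\<Sum>\<delta>\<in>cube (Suc n). g \<delta>) = (\<Sum>(y, \<delta>)\<in>{-1, 1} \<times> cube n. g (\<delta>(Suc n := y)))"
    unfolding cube_eq by (simp add: sum.reindex split_def)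
  also have "\<dots> = (\<Sum>\<delta>\<in>cube n. g (\<delta>(Suc n := 1)) + g (\<delta>(Suc n := -1)))"
    by (simp add: sum.cartesian_product[symmetric] sum.distrib add.commute)
  finally show ?thesis .
qed

lemma PQ_fun_upd_beyond:
  "n < k \<Longrightarrow> Pf a n (\<delta>(k := e)) = Pf a n \<delta> \<and> Qf a n (\<delta>(k := e)) = Qf a n \<delta>"
  by (induction n) auto

lemma Pf_fun_upd_Suc [simp]: "Pf a n (\<delta>(Suc n := e)) = Pf a n \<delta>"
  and Qf_fun_upd_Suc [simp]: "Qf a n (\<delta>(Suc n := e)) = Qf a n \<delta>"
  by (simp_all add: PQ_fun_upd_beyond)

lemma walsh_fun_upd_notin: "k \<notin> A \<Longrightarrow> walsh A (\<delta>(k := e)) = walsh A \<delta>"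
  unfolding walsh_def by (rule prod.cong) auto

lemma walsh_fun_upd_in:
  assumes "finite A" "k \<in> A"
  shows "walsh A (\<delta>(k := e)) = e * walsh (A - {k}) \<delta>"
  using assms by (simp add: walsh_def prod.remove walsh_fun_upd_notin[unfolded walsh_def])

lemma PQ_sq_sum:
  assumes "\<And>i. i \<in> {1..n} \<Longrightarrow> (\<delta> i)\<^sup>2 = 1"
  shows "(Pf a n \<delta>)\<^sup>2 + (Qf a n \<delta>)\<^sup>2 = 2 * (\<Prod>i=1..n. 1 + (a i)\<^sup>2)"
  using assms
proof (induction n)
  case 0
  then show ?case by simp
next
  case (Suc n)
  have "(Pf a (Suc n) \<delta>)\<^sup>2 + (Qf a (Suc n) \<delta>)\<^sup>2
      = (1 + (\<delta> (Suc n))\<^sup>2 * (a (Suc n))\<^sup>2) * ((Pf a n \<delta>)\<^sup>2 + (Qf a n \<delta>)\<^sup>2)"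
    by (simp add: power2_eq_square algebra_simps)
  with Suc show ?case
    by (simp add: prod.nat_ivl_Suc')
qed

lemma sum_cube_PQ_sq:
  "(\<Sum>\<delta>\<in>cube n. (Pf a n \<delta>)\<^sup>2) = 2 ^ n * (\<Prod>i=1..n. 1 + (a i)\<^sup>2)
 \<and> (\<Sum>\<delta>\<in>cube n. (Qf a n \<delta>)\<^sup>2) = 2 ^ n * (\<Prod>i=1..n. 1 + (a i)\<^sup>2)"
proof (induction n)
  case 0
  then show ?case by (simp add: cube_def)
next
  case (Suc n)
  let ?SP = "\<Sum>\<delta>\<in>cube n. (Pf a n \<delta>)\<^sup>2" and ?SQ = "\<Sum>\<delta>\<in>cube n. (Qf a n \<delta>)\<^sup>2"
  have "(\<Sum>\<delta>\<in>cube (Suc n). (Pf a (Suc n) \<delta>)\<^sup>2) = 2 * ?SP + 2 * (a (Suc n))\<^sup>2 * ?SQ"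
    and "(\<Sum>\<delta>\<in>cube (Suc n). (Qf a (Suc n) \<delta>)\<^sup>2) = 2 * (a (Suc n))\<^sup>2 * ?SP + 2 * ?SQ"
    by (simp_all add: sum_cube_Suc power2_eq_square algebra_simps sum.distrib sum_distrib_left)
  with Suc show ?case
    by (simp add: prod.nat_ivl_Suc' algebra_simps)
qed

lemma fourier_Pf_Suc:
  assumes "finite A"
  shows "fourier (Suc n) (Pf a (Suc n)) A =
    (if Suc n \<in> A then a (Suc n) * fourier n (Qf a n) (A - {Suc n}) else fourier n (Pf a n) A)"
  using assms
  by (simp add: fourier_def sum_cube_Suc walsh_fun_upd_in walsh_fun_upd_notin
      algebra_simps sum_distrib_left sum_divide_distrib)

lemma fourier_Qf_Suc:
  assumes "finite A"
  shows "fourier (Suc n) (Qf a (Suc n)) A =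
    (if Suc n \<in> A then a (Suc n) * fourier n (Pf a n) (A - {Suc n}) else - fourier n (Qf a n) A)"
  using assms
  by (simp add: fourier_def sum_cube_Suc walsh_fun_upd_in walsh_fun_upd_notin
      algebra_simps sum_distrib_left sum_divide_distrib sum_negf)

lemma fourier_PQ_sq:
  "A \<subseteq> {1..n} \<Longrightarrow>
    (fourier n (Pf a n) A)\<^sup>2 = (\<Prod>i\<in>A. (a i)\<^sup>2) \<and> (fourier n (Qf a n) A)\<^sup>2 = (\<Prod>i\<in>A. (a i)\<^sup>2)"
proof (induction n arbitrary: A)
  case 0
  then show ?case by (simp add: fourier_def cube_def walsh_def)
next
  case (Suc n)
  have "finite A"
    using Suc.prems finite_subset by blast
  show ?case
  proof (cases "Suc n \<in> A")
    case True
    have "A - {Suc n} \<subseteq> {1..n}"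
      using Suc.prems by (auto simp: atLeastAtMostSuc_conv)
    with Suc.IH show ?thesis
      unfolding fourier_Pf_Suc[OF \<open>finite A\<close>] fourier_Qf_Suc[OF \<open>finite A\<close>]
      by (simp add: True prod.remove[OF \<open>finite A\<close> True] power_mult_distrib)
  next
    case False
    then have "A \<subseteq> {1..n}"
      using Suc.prems by (auto simp: atLeastAtMostSuc_conv)
    with Suc.IH show ?thesis
      unfolding fourier_Pf_Suc[OF \<open>finite A\<close>] fourier_Qf_Suc[OF \<open>finite A\<close>]
      by (simp add: False)
  qed
qed

lemma abs_le_normInf: "\<delta> \<in> cube n \<Longrightarrow> \<bar>g \<delta>\<bar> \<le> normInf n g"
  unfolding normInf_def by (rule Max_ge) (simp_all add: finite_cube)

lemma normInf_le: "(\<And>\<delta>. \<delta> \<in> cube n \<Longrightarrow> \<bar>g \<delta>\<bar> \<le> M) \<Longrightarrow> normInf n g \<le> M"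
  unfolding normInf_def by (simp add: finite_cube cube_nonempty)

lemma norm2_le_normInf: "norm2 n g \<le> normInf n g"
proof -
  let ?M = "normInf n g"
  have M_nonneg: "0 \<le> ?M"
    using cube_nonempty abs_le_normInf by (meson abs_ge_zero equals0I order_trans)
  have "(\<Sum>\<delta>\<in>cube n. (g \<delta>)\<^sup>2) \<le> (\<Sum>\<delta>\<in>cube n. ?M\<^sup>2)"
    by (intro sum_mono) (metis abs_le_normInf abs_le_square_iff abs_of_nonneg M_nonneg)
  also have "\<dots> = 2 ^ n * ?M\<^sup>2"
    by (simp add: card_cube)
  finally have "(\<Sum>\<delta>\<in>cube n. (g \<delta>)\<^sup>2) / 2 ^ n \<le> ?M\<^sup>2"
    by (simp add: pos_divide_le_eq mult.commute)
  with M_nonneg show ?thesis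
    unfolding norm2_def by (rule real_le_lsqrt)
qed

theorem proposition1:
  fixes a :: "nat \<Rightarrow> real" and n :: nat
  assumes a_range: "\<And>i. i \<ge> 1 \<Longrightarrow> 0 < a i \<and> a i \<le> 1"
    and n_pos: "n \<ge> 1"
  shows "(\<forall>\<delta>\<in>cube n. (Pf a n \<delta>)\<^sup>2 + (Qf a n \<delta>)\<^sup>2 = 2 * (\<Prod>i=1..n. 1 + (a i)\<^sup>2))
    \<and> norm2 n (Pf a n) = (\<Prod>i=1..n. sqrt (1 + (a i)\<^sup>2))
    \<and> norm2 n (Qf a n) = (\<Prod>i=1..n. sqrt (1 + (a i)\<^sup>2))
    \<and> (\<Prod>i=1..n. sqrt (1 + (a i)\<^sup>2)) \<le> normInf n (Pf a n)
    \<and> normInf n (Pf a n) \<le> sqrt 2 * (\<Prod>i=1..n. sqrt (1 + (a i)\<^sup>2))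
    \<and> (\<Prod>i=1..n. sqrt (1 + (a i)\<^sup>2)) \<le> normInf n (Qf a n)
    \<and> normInf n (Qf a n) \<le> sqrt 2 * (\<Prod>i=1..n. sqrt (1 + (a i)\<^sup>2))
    \<and> (\<forall>A. A \<subseteq> {1..n} \<longrightarrow>
         (fourier n (Pf a n) A)\<^sup>2 = (\<Prod>i\<in>A. (a i)\<^sup>2)
       \<and> (fourier n (Qf a n) A)\<^sup>2 = (\<Prod>i\<in>A. (a i)\<^sup>2))"
proof -
  \<comment> \<open>The identities hold for every real sequence and every n.\<close>
  let ?C = "\<Prod>i=1..n. 1 + (a i)\<^sup>2"
  have sqrt_C: "sqrt ?C = (\<Prod>i=1..n. sqrt (1 + (a i)\<^sup>2))"
    by (rule real_sqrt_prod)
  have pointwise: "(Pf a n \<delta>)\<^sup>2 + (Qf a n \<delta>)\<^sup>2 = 2 * ?C" if "\<delta> \<in> cube n" for \<delta>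
    using that by (intro PQ_sq_sum) (force simp: cube_def PiE_iff)
  have "\<bar>Pf a n \<delta>\<bar> \<le> sqrt (2 * ?C)" "\<bar>Qf a n \<delta>\<bar> \<le> sqrt (2 * ?C)" if "\<delta> \<in> cube n" for \<delta>
    using pointwise[OF that] zero_le_power2[of "Pf a n \<delta>"] zero_le_power2[of "Qf a n \<delta>"]
    by (intro real_le_rsqrt; simp only: power2_abs; linarith)+
  then have sup_upper: "normInf n (Pf a n) \<le> sqrt 2 * sqrt ?C" "normInf n (Qf a n) \<le> sqrt 2 * sqrt ?C"
    by (simp_all add: normInf_le real_sqrt_mult)
  have L2: "norm2 n (Pf a n) = sqrt ?C" "norm2 n (Qf a n) = sqrt ?C"
    using sum_cube_PQ_sq[of a n] by (simp_all add: norm2_def)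
  show ?thesis
    unfolding sqrt_C[symmetric]
    using pointwise sup_upper L2 norm2_le_normInf[of n] fourier_PQ_sq[of _ n a] by metis
qed

end
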